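(* Let $H$ be a (complex) Hilbert space, $D\subset H$ a dense subspace, and $\mathcal{A},\mathcal{B}$ linear self-adjoint operators with domain $D$ (i.e. $\mathcal{A},\mathcal{B}:D\subset H\to H$). For $\alpha\in\mathbb{R}$ define $$\mathcal{T}=\begin{pmatrix}\mathcal{A}&\alpha\mathcal{B}\\-\alpha\mathcal{A}&\mathcal{B}\end{pmatrix}:D\times D\subset H\times H\to H\times H.$$ Then $\sigma(\mathcal{T})\cap i\mathbb{R}\subset\{0\}$. *)

theory Defs
  imports "HOL-Analysis.Analysis"
begin

text \<open>Complex inner product spaces (the inner product is conjugate-linear in the
first argument and linear in the second).  The real normed vector space structure
is the one induced by the complex structure.\<close>

class complex_inner = real_normed_vector +
  fixes scaleC :: "complex \<Rightarrow> 'a \<Rightarrow> 'a" (infixr "*\<^sub>C" 75)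
  fixes cinner :: "'a \<Rightarrow> 'a \<Rightarrow> complex"
  assumes scaleC_add_right: "a *\<^sub>C (x + y) = a *\<^sub>C x + a *\<^sub>C y"
    and scaleC_add_left: "(a + b) *\<^sub>C x = a *\<^sub>C x + b *\<^sub>C x"
    and scaleC_scaleC: "a *\<^sub>C (b *\<^sub>C x) = (a * b) *\<^sub>C x"
    and scaleC_one: "1 *\<^sub>C x = x"
    and scaleR_scaleC: "scaleR r x = complex_of_real r *\<^sub>C x"
    and cinner_commute: "cinner x y = cnj (cinner y x)"
    and cinner_add_left: "cinner (x + y) z = cinner x z + cinner y z"
    and cinner_scaleC_left: "cinner (a *\<^sub>C x) y = cnj a * cinner x y"
    and cinner_self_eq_zero: "cinner x x = 0 \<longleftrightarrow> x = 0"
    and norm_eq_sqrt_cinner: "norm x = sqrt (Re (cinner x x))"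

class chilbert = complex_inner + complete_space

instantiation prod :: (complex_inner, complex_inner) complex_inner
begin

definition scaleC_prod_def: "scaleC a p = (scaleC a (fst p), scaleC a (snd p))"
definition cinner_prod_def: "cinner p q = cinner (fst p) (fst q) + cinner (snd p) (snd q)"

lemma cinner_self_real: "cinner (x::'z::complex_inner) x = complex_of_real ((norm x)\<^sup>2)"
proof -
  have "Im (cinner x x) = 0" using cinner_commute[of x x]
    by (metis cnj.sel(2) equation_minus_iff neg_equal_zero)
  moreover have "Re (cinner x x) = (norm x)\<^sup>2"
  proof -
    have "0 \<le> sqrt (Re (cinner x x))" using norm_ge_zero[of x] by (simp only: norm_eq_sqrt_cinner)
    then have "0 \<le> Re (cinner x x)" by simp
    then show ?thesis by (simp add: norm_eq_sqrt_cinner)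
  qed
  ultimately show ?thesis by (simp add: complex_eq_iff)
qed

instance
proof
  fix a b :: complex and x y z :: "'a \<times> 'b" and r :: real
  show "a *\<^sub>C (x + y) = a *\<^sub>C x + a *\<^sub>C y"
    by (simp add: scaleC_prod_def scaleC_add_right)
  show "(a + b) *\<^sub>C x = a *\<^sub>C x + b *\<^sub>C x"
    by (simp add: scaleC_prod_def scaleC_add_left)
  show "a *\<^sub>C (b *\<^sub>C x) = (a * b) *\<^sub>C x"
    by (simp add: scaleC_prod_def scaleC_scaleC)
  show "1 *\<^sub>C x = x" by (simp add: scaleC_prod_def scaleC_one)
  show "r *\<^sub>R x = complex_of_real r *\<^sub>C x"
    by (simp add: scaleC_prod_def scaleR_scaleC scaleR_prod_def)
  show "cinner x y = cnj (cinner y x)"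
    by (simp add: cinner_prod_def cinner_commute[of "fst x"] cinner_commute[of "snd x"])
  show "cinner (x + y) z = cinner x z + cinner y z"
    by (simp add: cinner_prod_def cinner_add_left)
  show "cinner (a *\<^sub>C x) y = cnj a * cinner x y"
    by (simp add: cinner_prod_def scaleC_prod_def cinner_scaleC_left algebra_simps)
  show "(cinner x x = 0) = (x = 0)"
  proof
    assume "cinner x x = 0"
    then have "complex_of_real ((norm (fst x))\<^sup>2 + (norm (snd x))\<^sup>2) = 0"
      by (simp only: cinner_prod_def cinner_self_real of_real_add)
    then have "(norm (fst x))\<^sup>2 + (norm (snd x))\<^sup>2 = 0" by (simp only: of_real_eq_0_iff)
    then show "x = 0"
      by (metis add_nonneg_eq_0_iff norm_eq_zero prod.collapse zero_le_power2 zero_prod_def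
          power_eq_0_iff)
  next
    assume "x = 0" then show "cinner x x = 0"
      using cinner_self_eq_zero[of "0::'a"] cinner_self_eq_zero[of "0::'b"] by (simp add: cinner_prod_def)
  qed
  show "norm x = sqrt (Re (cinner x x))"
    by (simp add: cinner_prod_def cinner_self_real norm_prod_def)
qed

end

definition csubspace :: "'a::complex_inner set \<Rightarrow> bool" where
  "csubspace D \<longleftrightarrow> 0 \<in> D \<and> (\<forall>x\<in>D. \<forall>y\<in>D. x + y \<in> D) \<and> (\<forall>a. \<forall>x\<in>D. a *\<^sub>C x \<in> D)"

text \<open>A linear operator with domain \<open>D\<close> (values outside \<open>D\<close> are irrelevant).\<close>
definition clinear_on :: "'a::complex_inner set \<Rightarrow> ('a \<Rightarrow> 'b::complex_inner) \<Rightarrow> bool" where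
  "clinear_on D T \<longleftrightarrow> (\<forall>x\<in>D. \<forall>y\<in>D. T (x + y) = T x + T y) \<and>
                       (\<forall>a. \<forall>x\<in>D. T (a *\<^sub>C x) = a *\<^sub>C T x)"

definition adj_domain :: "'a::complex_inner set \<Rightarrow> ('a \<Rightarrow> 'a) \<Rightarrow> 'a set" where
  "adj_domain D T = {y. \<exists>z. \<forall>x\<in>D. cinner (T x) y = cinner x z}"

text \<open>Self-adjoint: \<open>T* = T\<close>, i.e. the adjoint has domain exactly \<open>D\<close>
  and agrees with \<open>T\<close> there (equivalently \<open>T\<close> is symmetric on \<open>D\<close>).\<close>
definition self_adjoint_on :: "'a::complex_inner set \<Rightarrow> ('a \<Rightarrow> 'a) \<Rightarrow> bool" where
  "self_adjoint_on D T \<longleftrightarrow> adj_domain D T = D \<and>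
     (\<forall>x\<in>D. \<forall>y\<in>D. cinner (T x) y = cinner x (T y))"

text \<open>Spectrum of an operator \<open>T\<close> with domain \<open>D\<close>: \<open>\<lambda>\<close> is in the resolvent set iff
  \<open>T - \<lambda>\<close> maps \<open>D\<close> bijectively onto the whole space with bounded inverse.\<close>
definition op_spectrum :: "'a::complex_inner set \<Rightarrow> ('a \<Rightarrow> 'a) \<Rightarrow> complex set" where
  "op_spectrum D T = {l. \<not> (bij_betw (\<lambda>x. T x - l *\<^sub>C x) D UNIV \<and>
      (\<exists>C. \<forall>x\<in>D. norm x \<le> C * norm (T x - l *\<^sub>C x)))}"

end

(*
  Write the operator matrix as T = (I + \<alpha>J) \<circ> diag(A, B) with J(x, y) = (y, -x), so that
  skew_pair c = cJ.  As J\<^sup>2 = -I, for l = (1 + \<alpha>\<^sup>2)\<kappa> one gets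
    T - l = (I + \<alpha>J) \<circ> (diag(A, B) + \<alpha>\<kappa>J - \<kappa>).
  If Re l = 0, then \<alpha>\<kappa>J is an everywhere defined symmetric operator, so diag(A, B) + \<alpha>\<kappa>J is
  self-adjoint on D \<times> D; if moreover l \<noteq> 0, then Im \<kappa> \<noteq> 0 and \<kappa> lies in its resolvent set,
  as for every self-adjoint operator: the bound |Im \<kappa>| \<parallel>u\<parallel> \<le> \<parallel>(S - \<kappa>)u\<parallel> and the closed graph
  make the range closed, self-adjointness makes its orthogonal complement trivial, and the
  projection theorem then makes it the whole space.  Finally I + \<alpha>J is a bijection with
  \<parallel>v\<parallel> \<le> \<parallel>(I + \<alpha>J)v\<parallel>, so l lies in the resolvent set of T.
*)

theory Submission
  imports Defs
begin

section \<open>Complex inner product spaces\<close>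

interpretation cvs: module "scaleC :: complex \<Rightarrow> 'a \<Rightarrow> 'a::complex_inner"
  by unfold_locales (simp_all add: scaleC_add_right scaleC_add_left scaleC_scaleC scaleC_one)

lemma cinner_add_right: "cinner x (y + z) = cinner x y + cinner x z"
  by (metis cinner_add_left cinner_commute complex_cnj_add)

lemma cinner_scaleC_right: "cinner x (a *\<^sub>C y) = a * cinner x y"
  by (metis cinner_commute cinner_scaleC_left complex_cnj_cnj complex_cnj_mult)

lemma cinner_zero_left [simp]: "cinner 0 y = 0"
  by (metis add_cancel_left_left cinner_add_left add_0)

lemma cinner_zero_right [simp]: "cinner y 0 = 0"
  by (metis cinner_commute cinner_zero_left complex_cnj_zero)

lemma cinner_minus_left: "cinner (- x) y = - cinner x y"
  by (metis cinner_add_left add.right_inverse cinner_zero_left add_eq_0_iff)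

lemma cinner_minus_right: "cinner y (- x) = - cinner y x"
  by (metis cinner_commute cinner_minus_left complex_cnj_minus)

lemma cinner_diff_left: "cinner (x - z) y = cinner x y - cinner z y"
  by (simp only: diff_conv_add_uminus cinner_add_left cinner_minus_left)

lemma cinner_diff_right: "cinner y (x - z) = cinner y x - cinner y z"
  by (simp only: diff_conv_add_uminus cinner_add_right cinner_minus_right)

lemmas cinner_simps = cinner_add_left cinner_add_right cinner_scaleC_left cinner_scaleC_right
  cinner_minus_left cinner_minus_right cinner_diff_left cinner_diff_right

lemma Re_cinner_commute: "Re (cinner y x) = Re (cinner x y)"
  by (metis cinner_commute cnj.sel(1))

lemma power2_norm_eq_cinner: "(norm x)\<^sup>2 = Re (cinner x x)"
  by (simp add: cinner_self_real)

lemma Im_cinner_self [simp]: "Im (cinner x x) = 0"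
  by (simp add: cinner_self_real)

lemma power2_norm_add: "(norm (x + y))\<^sup>2 = (norm x)\<^sup>2 + 2 * Re (cinner x y) + (norm y)\<^sup>2"
  unfolding power2_norm_eq_cinner by (simp add: cinner_simps Re_cinner_commute[of y x])

lemma power2_norm_diff: "(norm (x - y))\<^sup>2 = (norm x)\<^sup>2 - 2 * Re (cinner x y) + (norm y)\<^sup>2"
  unfolding power2_norm_eq_cinner by (simp add: cinner_simps Re_cinner_commute[of y x])

lemma norm_scaleC: "norm (a *\<^sub>C x) = cmod a * norm x"
proof -
  have "(norm (a *\<^sub>C x))\<^sup>2 = Re (cnj a * (a * cinner x x))"
    unfolding power2_norm_eq_cinner by (simp add: cinner_simps)
  also have "\<dots> = ((Re a)\<^sup>2 + (Im a)\<^sup>2) * (norm x)\<^sup>2"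
    unfolding cinner_self_real by (simp add: algebra_simps power2_eq_square)
  also have "\<dots> = (cmod a * norm x)\<^sup>2"
    by (simp add: cmod_power2 power_mult_distrib)
  finally show ?thesis
    by (simp add: power2_eq_iff_nonneg)
qed

lemma norm_cinner_le: "cmod (cinner x y) \<le> norm x * norm y"
proof (cases "y = 0")
  case False
  define p where "p = cinner y x"
  define n where "n = (norm y)\<^sup>2"
  have n: "n > 0" using False by (simp add: n_def)
  \<comment> \<open>expand \<open>0 \<le> \<parallel>x - t y\<parallel>\<^sup>2\<close> at the minimizing \<open>t = \<langle>y, x\<rangle> / \<parallel>y\<parallel>\<^sup>2\<close>\<close>
  define t where "t = p / complex_of_real n"
  have "0 \<le> (norm (x - t *\<^sub>C y))\<^sup>2" by simp
  also have "\<dots> = (norm x)\<^sup>2 + ((cmod t)\<^sup>2 * n + 2 * Re (- t * cnj p))"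
    using cinner_commute[of x y]
    by (simp add: power2_norm_diff norm_scaleC cinner_simps power_mult_distrib n_def p_def)
  also have "(cmod t)\<^sup>2 * n + 2 * Re (- t * cnj p) = - (cmod p)\<^sup>2 / n"
    using n cmod_power2[of p] unfolding t_def
    by (simp add: norm_divide power_divide cmod_power2 field_simps power2_eq_square)
  finally have "(cmod p)\<^sup>2 / n \<le> (norm x)\<^sup>2" by simp
  then have "(cmod p)\<^sup>2 \<le> (norm x * norm y)\<^sup>2"
    using n by (simp add: n_def pos_divide_le_eq power_mult_distrib)
  then have "cmod p \<le> norm x * norm y"
    by (rule power2_le_imp_le) simp
  then show ?thesis
    unfolding p_def by (metis cinner_commute complex_mod_cnj)
qed simp

lemma bounded_linear_cinner_right: "bounded_linear (\<lambda>x. cinner w x)"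
  by (rule bounded_linear_intro[where K="norm w"])
     (auto simp: cinner_add_right scaleR_scaleC cinner_scaleC_right scaleR_conv_of_real,
      metis norm_cinner_le mult.commute)

lemma bounded_linear_scaleC: "bounded_linear (\<lambda>x::'a::complex_inner. c *\<^sub>C x)"
  by (rule bounded_linear_intro[where K="cmod c"])
     (simp_all add: scaleC_add_right scaleR_scaleC scaleC_scaleC norm_scaleC mult.commute)

lemmas tendsto_cinner_right = bounded_linear.tendsto[OF bounded_linear_cinner_right]
lemmas tendsto_scaleC = bounded_linear.tendsto[OF bounded_linear_scaleC]

lemma csubspace_zero: "csubspace V \<Longrightarrow> 0 \<in> V"
  by (simp add: csubspace_def)

lemma csubspace_add: "csubspace V \<Longrightarrow> x \<in> V \<Longrightarrow> y \<in> V \<Longrightarrow> x + y \<in> V"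
  by (simp add: csubspace_def)

lemma csubspace_scaleC: "csubspace V \<Longrightarrow> x \<in> V \<Longrightarrow> a *\<^sub>C x \<in> V"
  by (simp add: csubspace_def)

lemma csubspace_scaleR: "csubspace V \<Longrightarrow> x \<in> V \<Longrightarrow> r *\<^sub>R x \<in> V"
  by (simp add: csubspace_def scaleR_scaleC)

lemma minus_eq_scaleC: "- x = (-1) *\<^sub>C x"
  by simp

lemma csubspace_diff: "csubspace V \<Longrightarrow> x \<in> V \<Longrightarrow> y \<in> V \<Longrightarrow> x - y \<in> V"
  unfolding diff_conv_add_uminus minus_eq_scaleC by (intro csubspace_add csubspace_scaleC)

lemma clinear_on_diff:
  assumes "csubspace V" "clinear_on V S" "x \<in> V" "y \<in> V"
  shows "S (x - y) = S x - S y"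
proof -
  have "S (x + (-1) *\<^sub>C y) = S x + (-1) *\<^sub>C S y"
    using assms csubspace_scaleC[OF assms(1,4)] unfolding clinear_on_def by metis
  then show ?thesis by simp
qed

lemma clinear_on_zero: "csubspace D \<Longrightarrow> clinear_on D S \<Longrightarrow> S 0 = 0"
  unfolding clinear_on_def using csubspace_zero[of D] by (metis cvs.scale_zero_left)

section \<open>Orthogonal projection onto closed subspaces\<close>

lemma Cauchy_if_dist_le_add:
  fixes X :: "nat \<Rightarrow> 'a::metric_space"
  assumes "e \<longlonglongrightarrow> 0" and "\<And>m n. dist (X m) (X n) \<le> e m + e n"
  shows "Cauchy X"
proof (rule metric_CauchyI)
  fix \<epsilon> :: real assume "\<epsilon> > 0"
  then obtain N where N: "\<And>n. n \<ge> N \<Longrightarrow> \<bar>e n\<bar> < \<epsilon> / 2"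
    using assms(1) unfolding LIMSEQ_iff by (metis half_gt_zero real_norm_def diff_zero)
  have "dist (X m) (X n) < \<epsilon>" if "m \<ge> N" "n \<ge> N" for m n
    using assms(2)[of m n] N[OF that(1)] N[OF that(2)] by linarith
  then show "\<exists>M. \<forall>m\<ge>M. \<forall>n\<ge>M. dist (X m) (X n) < \<epsilon>"
    by blast
qed

lemma nearest_point_orthogonal:
  assumes "csubspace V" and "g \<in> V" and nearest: "\<And>v. v \<in> V \<Longrightarrow> norm (f - g) \<le> norm (f - v)"
    and "v \<in> V"
  shows "cinner v (f - g) = 0"
proof -
  define w where "w = f - g"
  define p where "p = cinner w v"
  define t where "t = 1 / ((norm v)\<^sup>2 + 1)"
  have "(norm v)\<^sup>2 + 1 > 0"
    by (simp add: add_nonneg_pos)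
  then have t: "t > 0" "t * (norm v)\<^sup>2 \<le> 1"
    by (simp_all add: t_def)
  \<comment> \<open>perturb \<open>g\<close> along \<open>v\<close> by the complex step \<open>t \<langle>v, w\<rangle>\<close>\<close>
  have "g + (t * cnj p) *\<^sub>C v \<in> V"
    by (intro csubspace_add csubspace_scaleC assms)
  then have "(norm w)\<^sup>2 \<le> (norm (w - (t * cnj p) *\<^sub>C v))\<^sup>2"
    using nearest unfolding w_def by (simp add: diff_diff_eq power_mono)
  also have "\<dots> = (norm w)\<^sup>2 - 2 * t * (cmod p)\<^sup>2 + t\<^sup>2 * (cmod p)\<^sup>2 * (norm v)\<^sup>2"
  proof -
    have "cinner w ((t * cnj p) *\<^sub>C v) = complex_of_real (t * (cmod p)\<^sup>2)"
      using complex_norm_square[of p] by (simp add: cinner_scaleC_right p_def)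
    then show ?thesis
      unfolding power2_norm_diff using t(1)
      by (simp add: norm_scaleC norm_mult power_mult_distrib)
  qed
  finally have "t * (2 * (cmod p)\<^sup>2) \<le> t * ((cmod p)\<^sup>2 * (t * (norm v)\<^sup>2))"
    by (simp add: power2_eq_square algebra_simps)
  then have "2 * (cmod p)\<^sup>2 \<le> (cmod p)\<^sup>2 * (t * (norm v)\<^sup>2)"
    using t(1) by simp
  also have "\<dots> \<le> (cmod p)\<^sup>2"
    using t(2) mult_left_mono[of _ 1 "(cmod p)\<^sup>2"] by simp
  finally have "p = 0" by simp
  then show ?thesis
    by (metis cinner_commute complex_cnj_zero p_def w_def)
qed

lemma minimizing_sequence_Cauchy:
  assumes "csubspace V" and r: "\<And>n. r n \<in> V" and d: "\<And>v. v \<in> V \<Longrightarrow> d \<le> norm (f - v)"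
    and lim: "(\<lambda>n. norm (f - r n)) \<longlonglongrightarrow> d"
  shows "Cauchy r"
proof (rule Cauchy_if_dist_le_add)
  define e where "e n = sqrt (2 * ((norm (f - r n))\<^sup>2 - d\<^sup>2))" for n
  show "e \<longlonglongrightarrow> 0"
  proof -
    have "(\<lambda>n. sqrt (2 * ((norm (f - r n))\<^sup>2 - d\<^sup>2))) \<longlonglongrightarrow> sqrt (2 * (d\<^sup>2 - d\<^sup>2))"
      by (intro tendsto_intros lim)
    then show ?thesis
      by (simp add: e_def[abs_def])
  qed
  have "0 \<le> d"
    by (rule LIMSEQ_le_const[OF lim]) simp
  have e_nonneg: "0 \<le> e n" for n
    using d[OF r, of n] \<open>0 \<le> d\<close> by (simp add: e_def power_mono)
  have e_sq: "(e n)\<^sup>2 = 2 * ((norm (f - r n))\<^sup>2 - d\<^sup>2)" for n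
    using d[OF r, of n] \<open>0 \<le> d\<close> by (simp add: e_def power_mono)
  fix m n
  \<comment> \<open>the parallelogram law at the midpoint of \<open>r m\<close> and \<open>r n\<close>, which lies in \<open>V\<close>\<close>
  define mid where "mid = (1/2) *\<^sub>R (r m + r n)"
  have "d \<le> norm (f - mid)"
    unfolding mid_def by (intro d csubspace_scaleR csubspace_add assms)
  moreover have "(f - r m) + (f - r n) = 2 *\<^sub>R (f - mid)"
    by (simp add: mid_def scaleR_right_diff_distrib scaleR_2)
  ultimately have "4 * d\<^sup>2 \<le> (norm ((f - r m) + (f - r n)))\<^sup>2"
    using \<open>0 \<le> d\<close> power_mono[of d "norm (f - mid)" 2] by (simp add: power_mult_distrib)
  moreover have "(norm ((f - r m) + (f - r n)))\<^sup>2 + (norm (r m - r n))\<^sup>2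
      = 2 * (norm (f - r m))\<^sup>2 + 2 * (norm (f - r n))\<^sup>2"
    using power2_norm_add[of "f - r m" "f - r n"] power2_norm_diff[of "f - r n" "f - r m"]
    by (simp add: norm_minus_commute Re_cinner_commute[of "f - r n"])
  ultimately have "(dist (r m) (r n))\<^sup>2 \<le> (e m)\<^sup>2 + (e n)\<^sup>2"
    by (simp add: dist_norm e_sq)
  also have "\<dots> \<le> (e m + e n)\<^sup>2"
    using e_nonneg[of m] e_nonneg[of n] by (simp add: power2_sum)
  finally show "dist (r m) (r n) \<le> e m + e n"
    by (rule power2_le_imp_le) (simp add: e_nonneg add_nonneg_nonneg)
qed

lemma nearest_point_exists:
  fixes V :: "'a::chilbert set"
  assumes "csubspace V" and "closed V"
  obtains g where "g \<in> V" and "\<And>v. v \<in> V \<Longrightarrow> norm (f - g) \<le> norm (f - v)"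
proof -
  define d where "d = infdist f V"
  have d_le: "d \<le> norm (f - v)" if "v \<in> V" for v
    using infdist_le[OF that] by (simp add: d_def dist_norm)
  have "\<exists>v\<in>V. norm (f - v) < d + 1 / Suc n" for n
  proof -
    have "V \<noteq> {}"
      using csubspace_zero[OF assms(1)] by blast
    moreover have "(INF v\<in>V. dist f v) < d + 1 / Suc n"
      using \<open>V \<noteq> {}\<close> by (simp add: d_def infdist_notempty)
    ultimately show ?thesis
      by (subst (asm) cINF_less_iff) (auto intro: bdd_belowI2[of _ 0] simp: dist_norm)
  qed
  then obtain r where r: "\<And>n. r n \<in> V" and r_lt: "\<And>n. norm (f - r n) < d + 1 / Suc n"
    by metis
  have lim: "(\<lambda>n. norm (f - r n)) \<longlonglongrightarrow> d"
  proof (rule tendsto_sandwich)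
    show "\<forall>\<^sub>F n in sequentially. d \<le> norm (f - r n)"
      by (intro always_eventually allI d_le r)
    show "\<forall>\<^sub>F n in sequentially. norm (f - r n) \<le> d + 1 / Suc n"
      by (intro always_eventually allI less_imp_le r_lt)
    show "(\<lambda>n. d + 1 / Suc n) \<longlonglongrightarrow> d"
      using tendsto_add[OF tendsto_const LIMSEQ_Suc[OF lim_const_over_n[of 1]], of d] by simp
  qed simp
  have "Cauchy r"
    by (rule minimizing_sequence_Cauchy[OF assms(1) r d_le lim])
  then obtain g where g: "r \<longlonglongrightarrow> g"
    using Cauchy_convergent_iff convergent_def by blast
  have "g \<in> V"
    by (rule closed_sequentially[OF assms(2) r g])
  moreover have "norm (f - g) = d"
    using tendsto_unique[OF _ tendsto_norm[OF tendsto_diff[OF tendsto_const g]] lim] by simp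
  ultimately show ?thesis
    using that d_le by simp
qed

lemma closed_csubspace_eq_UNIV:
  fixes V :: "'a::chilbert set"
  assumes "csubspace V" and "closed V" and "\<And>w. (\<And>v. v \<in> V \<Longrightarrow> cinner v w = 0) \<Longrightarrow> w = 0"
  shows "V = UNIV"
proof -
  have "f \<in> V" for f
  proof -
    obtain g where "g \<in> V" "\<And>v. v \<in> V \<Longrightarrow> norm (f - g) \<le> norm (f - v)"
      using nearest_point_exists[OF assms(1,2)] by blast
    then have "f - g = 0"
      using assms(3) nearest_point_orthogonal[OF assms(1)] by blast
    then show ?thesis
      using \<open>g \<in> V\<close> by simp
  qed
  then show ?thesis by blast
qed

section \<open>Self-adjoint operators\<close>

lemma orthogonal_dense_eq_0:
  assumes "closure D = UNIV" and "\<And>z. z \<in> D \<Longrightarrow> cinner z w = 0"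
  shows "w = 0"
proof -
  obtain s where s: "\<And>n. s n \<in> D" and lim: "s \<longlonglongrightarrow> w"
    using closure_sequential[of w D] assms(1) by auto
  have "(\<lambda>n. cinner w (s n)) \<longlonglongrightarrow> cinner w w"
    by (rule tendsto_cinner_right[OF lim])
  moreover have "cinner w (s n) = 0" for n
    using assms(2)[OF s] cinner_commute[of w "s n"] by simp
  ultimately have "cinner w w = 0"
    using LIMSEQ_unique[OF _ tendsto_const] by simp
  then show ?thesis
    by (simp add: cinner_self_eq_zero)
qed

lemma self_adjoint_on_adjoint_eq:
  assumes "closure D = UNIV" and "self_adjoint_on D S"
    and adj: "\<And>z. z \<in> D \<Longrightarrow> cinner (S z) w = cinner z v"
  shows "w \<in> D" and "S w = v"
proof -
  show "w \<in> D"
    using assms(2) adj unfolding self_adjoint_on_def adj_domain_def by blast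
  then have "cinner z (S w - v) = 0" if "z \<in> D" for z
    using assms(2) adj[OF that] that by (simp add: self_adjoint_on_def cinner_diff_right)
  then show "S w = v"
    using orthogonal_dense_eq_0[OF assms(1)] by fastforce
qed

lemma self_adjoint_on_graph_closed:
  assumes "closure D = UNIV" and "self_adjoint_on D S"
    and "\<And>n. x n \<in> D" and "x \<longlonglongrightarrow> x0" and "(\<lambda>n. S (x n)) \<longlonglongrightarrow> y"
  shows "x0 \<in> D" and "S x0 = y"
proof -
  have "cinner (S z) x0 = cinner z y" if "z \<in> D" for z
  proof (rule LIMSEQ_unique)
    show "(\<lambda>n. cinner (S z) (x n)) \<longlonglongrightarrow> cinner (S z) x0"
      by (rule tendsto_cinner_right) fact
    have "cinner (S z) (x n) = cinner z (S (x n))" for n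
      using assms(2,3) that by (simp add: self_adjoint_on_def)
    then show "(\<lambda>n. cinner (S z) (x n)) \<longlonglongrightarrow> cinner z y"
      using tendsto_cinner_right[OF assms(5)] by simp
  qed
  then show "x0 \<in> D" and "S x0 = y"
    using self_adjoint_on_adjoint_eq[OF assms(1,2)] by blast+
qed

lemma self_adjoint_on_Im_cinner:
  assumes "self_adjoint_on D S" and "x \<in> D"
  shows "Im (cinner x (S x)) = 0"
proof -
  have "cnj (cinner x (S x)) = cinner x (S x)"
    using assms cinner_commute[of "S x" x] by (simp add: self_adjoint_on_def)
  then show ?thesis
    by (metis cnj.sel(2) equation_minus_iff neg_equal_zero)
qed

lemma self_adjoint_on_bounded_below:
  assumes "self_adjoint_on D S" and "x \<in> D"
  shows "\<bar>Im \<mu>\<bar> * norm x \<le> norm (S x - \<mu> *\<^sub>C x)"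
proof -
  have "Im (cinner x (S x - \<mu> *\<^sub>C x)) = - Im \<mu> * (norm x)\<^sup>2"
    using self_adjoint_on_Im_cinner[OF assms] by (simp add: cinner_simps cinner_self_real)
  then have "\<bar>Im \<mu>\<bar> * (norm x)\<^sup>2 \<le> cmod (cinner x (S x - \<mu> *\<^sub>C x))"
    by (metis abs_Im_le_cmod abs_minus_cancel abs_mult abs_power2 mult_minus_left power2_abs)
  also have "\<dots> \<le> norm x * norm (S x - \<mu> *\<^sub>C x)"
    by (rule norm_cinner_le)
  finally have "norm x * (\<bar>Im \<mu>\<bar> * norm x) \<le> norm x * norm (S x - \<mu> *\<^sub>C x)"
    by (simp add: power2_eq_square algebra_simps)
  then show ?thesis
    by (cases "x = 0") simp_all
qed

lemma csubspace_image:
  assumes "csubspace E" and "clinear_on E S"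
  shows "csubspace (S ` E)"
proof -
  have add: "S (x + y) = S x + S y" and scale: "S (a *\<^sub>C x) = a *\<^sub>C S x"
    if "x \<in> E" "y \<in> E" for x y a
    using assms(2) that unfolding clinear_on_def by blast+
  have "0 \<in> S ` E"
    using csubspace_zero[OF assms(1)] clinear_on_zero[OF assms] by (metis image_eqI)
  moreover have "S x + S y \<in> S ` E" if "x \<in> E" "y \<in> E" for x y
    using add[OF that] csubspace_add[OF assms(1) that] by (metis image_eqI)
  moreover have "a *\<^sub>C S x \<in> S ` E" if "x \<in> E" for x a
    using scale[OF that that] csubspace_scaleC[OF assms(1) that] by (metis image_eqI)
  ultimately show ?thesis
    unfolding csubspace_def by blast
qed

lemma closed_image_if_bounded_below:
  fixes S :: "'a::chilbert \<Rightarrow> 'b::complex_inner"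
  assumes "csubspace E" and "clinear_on E S" and bound: "\<And>u. u \<in> E \<Longrightarrow> norm u \<le> C * norm (S u)"
    and graph: "\<And>u u0 g. (\<And>n. u n \<in> E) \<Longrightarrow> u \<longlonglongrightarrow> u0 \<Longrightarrow> (\<lambda>n. S (u n)) \<longlonglongrightarrow> g
                  \<Longrightarrow> u0 \<in> E \<and> S u0 = g"
  shows "closed (S ` E)"
  unfolding closed_sequential_limits
proof (intro allI impI, elim conjE)
  fix r g assume r: "\<forall>n. r n \<in> S ` E" and lim: "r \<longlonglongrightarrow> g"
  then obtain u where u: "\<And>n. u n \<in> E" and Su: "\<And>n. S (u n) = r n"
    unfolding image_iff by metis
  have dist_u: "dist (u m) (u n) \<le> \<bar>C\<bar> * dist (r m) g + \<bar>C\<bar> * dist (r n) g" for m n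
  proof -
    have "dist (u m) (u n) \<le> C * norm (r m - r n)"
      using bound[OF csubspace_diff[OF assms(1) u u]] clinear_on_diff[OF assms(1,2) u u]
      by (simp add: dist_norm Su)
    also have "\<dots> \<le> \<bar>C\<bar> * (dist (r m) g + dist (r n) g)"
      by (intro mult_mono abs_ge_self) (simp_all add: dist_triangle2 flip: dist_norm)
    finally show ?thesis
      by (simp only: distrib_left)
  qed
  have "(\<lambda>n. \<bar>C\<bar> * dist (r n) g) \<longlonglongrightarrow> 0"
    using tendsto_mult_right_zero[OF tendsto_dist_iff[THEN iffD1, OF lim]] .
  then have "Cauchy u"
    using dist_u by (rule Cauchy_if_dist_le_add)
  then obtain u0 where "u \<longlonglongrightarrow> u0"
    using Cauchy_convergent_iff convergent_def by blast
  then have "u0 \<in> E \<and> S u0 = g"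
    using graph[OF u] lim by (simp add: Su)
  then show "g \<in> S ` E"
    by blast
qed

theorem self_adjoint_on_spectrum_real:
  fixes S :: "'a::chilbert \<Rightarrow> 'a"
  assumes "csubspace D" and "closure D = UNIV" and "clinear_on D S" and "self_adjoint_on D S"
  shows "op_spectrum D S \<subseteq> {\<mu>. Im \<mu> = 0}"
proof (rule subsetI, rule ccontr)
  fix \<mu> assume "\<mu> \<in> op_spectrum D S" and "\<mu> \<notin> {\<mu>. Im \<mu> = 0}"
  then have "Im \<mu> \<noteq> 0"
    by simp
  define R where "R x = S x - \<mu> *\<^sub>C x" for x
  have lin: "clinear_on D R"
    using assms(3) by (simp add: clinear_on_def R_def algebra_simps)
  have bound: "norm x \<le> (1 / \<bar>Im \<mu>\<bar>) * norm (R x)" if "x \<in> D" for x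
    using self_adjoint_on_bounded_below[OF assms(4) that, of \<mu>] \<open>Im \<mu> \<noteq> 0\<close>
    by (simp add: R_def field_simps)
  have graph: "u0 \<in> D \<and> R u0 = g"
    if "\<And>n. u n \<in> D" and "u \<longlonglongrightarrow> u0" and "(\<lambda>n. R (u n)) \<longlonglongrightarrow> g" for u u0 g
  proof -
    have "(\<lambda>n. R (u n) + \<mu> *\<^sub>C u n) \<longlonglongrightarrow> g + \<mu> *\<^sub>C u0"
      by (intro tendsto_add tendsto_scaleC that)
    then have "(\<lambda>n. S (u n)) \<longlonglongrightarrow> g + \<mu> *\<^sub>C u0"
      by (simp add: R_def)
    then show ?thesis
      using self_adjoint_on_graph_closed[OF assms(2,4) that(1,2)] by (simp add: R_def)
  qed
  have "R ` D = UNIV"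
  proof (rule closed_csubspace_eq_UNIV)
    show "csubspace (R ` D)"
      by (rule csubspace_image[OF assms(1) lin])
    show "closed (R ` D)"
      by (rule closed_image_if_bounded_below[OF assms(1) lin bound graph])
    fix w assume orth: "\<And>v. v \<in> R ` D \<Longrightarrow> cinner v w = 0"
    have "cinner (S z) w = cinner z (cnj \<mu> *\<^sub>C w)" if "z \<in> D" for z
      using orth[OF imageI[OF that]] by (simp add: R_def cinner_simps)
    then have "w \<in> D" and "S w - cnj \<mu> *\<^sub>C w = 0"
      using self_adjoint_on_adjoint_eq[OF assms(2,4)] by simp_all
    then show "w = 0"
      using self_adjoint_on_bounded_below[OF assms(4), of w "cnj \<mu>"] \<open>Im \<mu> \<noteq> 0\<close>
      by (simp add: mult_le_0_iff)
  qed
  moreover have "inj_on R D"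
  proof (rule inj_onI)
    fix x y assume "x \<in> D" "y \<in> D" "R x = R y"
    then show "x = y"
      using bound[OF csubspace_diff[OF assms(1)]] clinear_on_diff[OF assms(1) lin] by fastforce
  qed
  ultimately show False
    using bound \<open>\<mu> \<in> op_spectrum D S\<close> unfolding op_spectrum_def bij_betw_def R_def by blast
qed

section \<open>Operators on \<open>H \<times> H\<close>\<close>

instance prod :: (chilbert, chilbert) chilbert ..

lemma scaleC_Pair: "c *\<^sub>C (x, y) = (c *\<^sub>C x, c *\<^sub>C y)"
  by (simp add: scaleC_prod_def)

lemma cinner_Pair: "cinner (x, y) (u, v) = cinner x u + cinner y v"
  by (simp add: cinner_prod_def)

lemma csubspace_Times: "csubspace D \<Longrightarrow> csubspace E \<Longrightarrow> csubspace (D \<times> E)"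
  by (auto simp: csubspace_def scaleC_prod_def zero_prod_def)

lemma clinear_on_map_prod:
  "clinear_on D A \<Longrightarrow> clinear_on E B \<Longrightarrow> clinear_on (D \<times> E) (map_prod A B)"
  by (auto simp: clinear_on_def scaleC_Pair)

lemma clinear_on_add:
  "clinear_on D S \<Longrightarrow> clinear_on D K \<Longrightarrow> clinear_on D (\<lambda>x. S x + K x)"
  by (simp add: clinear_on_def algebra_simps)

lemma self_adjoint_onI:
  assumes "\<And>x y. x \<in> D \<Longrightarrow> y \<in> D \<Longrightarrow> cinner (S x) y = cinner x (S y)"
    and "adj_domain D S \<subseteq> D"
  shows "self_adjoint_on D S"
  using assms unfolding self_adjoint_on_def adj_domain_def by blast

lemma self_adjoint_on_map_prod:
  assumes "csubspace D" "csubspace E" "clinear_on D A" "clinear_on E B"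
    and "self_adjoint_on D A" "self_adjoint_on E B"
  shows "self_adjoint_on (D \<times> E) (map_prod A B)"
proof (rule self_adjoint_onI)
  show "cinner (map_prod A B u) v = cinner u (map_prod A B v)" if "u \<in> D \<times> E" "v \<in> D \<times> E" for u v
    using that assms(5,6) by (auto simp: cinner_Pair self_adjoint_on_def)
  show "adj_domain (D \<times> E) (map_prod A B) \<subseteq> D \<times> E"
  proof
    fix w assume "w \<in> adj_domain (D \<times> E) (map_prod A B)"
    then obtain z where z: "\<And>u. u \<in> D \<times> E \<Longrightarrow> cinner (map_prod A B u) w = cinner u z"
      unfolding adj_domain_def by blast
    have "cinner (A x) (fst w) = cinner x (fst z)" if "x \<in> D" for x
      using z[of "(x, 0)"] that csubspace_zero[OF assms(2)] clinear_on_zero[OF assms(2,4)]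
      by (simp add: cinner_prod_def)
    then have "fst w \<in> D"
      using assms(5) unfolding self_adjoint_on_def adj_domain_def by blast
    moreover have "cinner (B y) (snd w) = cinner y (snd z)" if "y \<in> E" for y
      using z[of "(0, y)"] that csubspace_zero[OF assms(1)] clinear_on_zero[OF assms(1,3)]
      by (simp add: cinner_prod_def)
    then have "snd w \<in> E"
      using assms(6) unfolding self_adjoint_on_def adj_domain_def by blast
    ultimately show "w \<in> D \<times> E"
      by (simp add: mem_Times_iff)
  qed
qed

lemma self_adjoint_on_add_symmetric:
  assumes "self_adjoint_on D S" and K: "\<And>x y. cinner (K x) y = cinner x (K y)"
  shows "self_adjoint_on D (\<lambda>x. S x + K x)"
proof (rule self_adjoint_onI)
  show "cinner (S x + K x) y = cinner x (S y + K y)" if "x \<in> D" "y \<in> D" for x y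
    using assms(1) that K[of x y] by (simp add: self_adjoint_on_def cinner_simps)
  show "adj_domain D (\<lambda>x. S x + K x) \<subseteq> D"
  proof
    fix w assume "w \<in> adj_domain D (\<lambda>x. S x + K x)"
    then obtain z where z: "\<And>x. x \<in> D \<Longrightarrow> cinner (S x + K x) w = cinner x z"
      unfolding adj_domain_def by blast
    have "cinner (S x) w = cinner x (z - K w)" if "x \<in> D" for x
      using z[OF that] K[of x w] by (simp add: cinner_simps algebra_simps)
    then show "w \<in> D"
      using assms(1) unfolding self_adjoint_on_def adj_domain_def by blast
  qed
qed

lemma power2_norm_Pair: "(norm (x, y))\<^sup>2 = (norm x)\<^sup>2 + (norm y)\<^sup>2"
  by (simp add: norm_Pair)

definition skew_pair :: "complex \<Rightarrow> 'a::complex_inner \<times> 'a \<Rightarrow> 'a \<times> 'a" where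
  "skew_pair c = (\<lambda>(x, y). (c *\<^sub>C y, - (c *\<^sub>C x)))"

lemma skew_pair_Pair [simp]: "skew_pair c (x, y) = (c *\<^sub>C y, - (c *\<^sub>C x))"
  by (simp add: skew_pair_def)

lemma clinear_on_skew_pair: "clinear_on D (skew_pair c)"
  by (auto simp: clinear_on_def skew_pair_def scaleC_prod_def algebra_simps cvs.scale_left_commute)

lemma cinner_skew_pair:
  assumes "Re c = 0"
  shows "cinner (skew_pair c u) v = cinner u (skew_pair c v)"
proof -
  have "cnj c = - c"
    using assms by (simp add: complex_eq_iff)
  then show ?thesis
    by (cases u, cases v) (simp add: cinner_Pair cinner_simps)
qed

lemma norm_le_norm_add_skew_pair: "norm v \<le> norm (v + skew_pair (complex_of_real \<alpha>) v)"
proof -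
  obtain p q where v: "v = (p, q)"
    by fastforce
  have "(norm (p + complex_of_real \<alpha> *\<^sub>C q))\<^sup>2 + (norm (q - complex_of_real \<alpha> *\<^sub>C p))\<^sup>2
      = (1 + \<alpha>\<^sup>2) * ((norm p)\<^sup>2 + (norm q)\<^sup>2)"
    unfolding power2_norm_add power2_norm_diff
    by (simp add: norm_scaleC cinner_simps Re_cinner_commute[of q p] algebra_simps power_mult_distrib)
  then have "(norm v)\<^sup>2 \<le> (norm (v + skew_pair (complex_of_real \<alpha>) v))\<^sup>2"
    by (simp add: v power2_norm_Pair algebra_simps)
  then show ?thesis
    by (rule power2_le_imp_le) simp
qed

lemma bij_add_skew_pair:
  assumes "1 + c * c \<noteq> 0"
  shows "bij (\<lambda>v :: 'a::complex_inner \<times> 'a. v + skew_pair c v)"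
proof -
  define k where "k = 1 + c * c"
  \<comment> \<open>\<open>skew_pair c\<close> squares to \<open>-c\<^sup>2\<close>, so \<open>I - skew_pair c\<close> inverts \<open>I + skew_pair c\<close> up to the factor \<open>k\<close>\<close>
  have inv: "(v + skew_pair c v) - skew_pair c (v + skew_pair c v) = k *\<^sub>C v"
    "(v - skew_pair c v) + skew_pair c (v - skew_pair c v) = k *\<^sub>C v" for v :: "'a \<times> 'a"
    by (cases v; simp add: scaleC_Pair k_def algebra_simps)+
  have scale: "skew_pair c (a *\<^sub>C v) = a *\<^sub>C skew_pair c v" for a and v :: "'a \<times> 'a"
    by (cases v) (simp add: scaleC_Pair mult.commute)
  have "k \<noteq> 0"
    using assms by (simp add: k_def)
  show ?thesis
  proof (rule o_bij[of "\<lambda>w. inverse k *\<^sub>C (w - skew_pair c w)"])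
    show "(\<lambda>w. inverse k *\<^sub>C (w - skew_pair c w)) \<circ> (\<lambda>v :: 'a \<times> 'a. v + skew_pair c v) = id"
      using \<open>k \<noteq> 0\<close> by (simp add: fun_eq_iff inv(1) del: skew_pair_Pair split_paired_All)
    show "(\<lambda>v :: 'a \<times> 'a. v + skew_pair c v) \<circ> (\<lambda>w. inverse k *\<^sub>C (w - skew_pair c w)) = id"
      using \<open>k \<noteq> 0\<close>
      by (simp add: fun_eq_iff scale inv(2) del: skew_pair_Pair split_paired_All
          flip: cvs.scale_right_distrib)
  qed
qed

lemma block_operator_factorization:
  fixes A B :: "'a::complex_inner \<Rightarrow> 'a"
  assumes "l = (1 + a * a) * \<kappa>"
  shows "(A x + a *\<^sub>C B y, - (a *\<^sub>C A x) + B y) - l *\<^sub>C (x, y)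
    = (\<lambda>w. w + skew_pair a w) (map_prod A B (x, y) + skew_pair (a * \<kappa>) (x, y) - \<kappa> *\<^sub>C (x, y))"
  by (simp add: assms scaleC_Pair algebra_simps)

lemma op_spectrum_factor:
  assumes "\<mu> \<notin> op_spectrum D S" and "bij R" and R_bound: "\<And>v. norm v \<le> c * norm (R v)"
    and factor: "\<And>x. x \<in> D \<Longrightarrow> T x - l *\<^sub>C x = R (S x - \<mu> *\<^sub>C x)"
  shows "l \<notin> op_spectrum D T"
proof -
  obtain C where bij_S: "bij_betw (\<lambda>x. S x - \<mu> *\<^sub>C x) D UNIV"
    and C: "\<And>x. x \<in> D \<Longrightarrow> norm x \<le> C * norm (S x - \<mu> *\<^sub>C x)"
    using assms(1) unfolding op_spectrum_def by blast
  have "bij_betw (\<lambda>x. T x - l *\<^sub>C x) D UNIV \<longleftrightarrow> bij_betw (R \<circ> (\<lambda>x. S x - \<mu> *\<^sub>C x)) D UNIV"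
    by (rule bij_betw_cong) (simp add: factor)
  then have "bij_betw (\<lambda>x. T x - l *\<^sub>C x) D UNIV"
    using bij_betw_trans[OF bij_S assms(2)] by simp
  moreover have "norm x \<le> (\<bar>C\<bar> * \<bar>c\<bar>) * norm (T x - l *\<^sub>C x)" if "x \<in> D" for x
  proof -
    have "norm x \<le> \<bar>C\<bar> * norm (S x - \<mu> *\<^sub>C x)"
      using C[OF that] abs_ge_self[of C] mult_right_mono[of C "\<bar>C\<bar>" "norm (S x - \<mu> *\<^sub>C x)"]
      by simp
    also have "\<dots> \<le> \<bar>C\<bar> * (\<bar>c\<bar> * norm (T x - l *\<^sub>C x))"
    proof (rule mult_left_mono)
      show "norm (S x - \<mu> *\<^sub>C x) \<le> \<bar>c\<bar> * norm (T x - l *\<^sub>C x)"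
        using R_bound[of "S x - \<mu> *\<^sub>C x"] abs_ge_self[of c]
          mult_right_mono[of c "\<bar>c\<bar>" "norm (T x - l *\<^sub>C x)"]
        by (simp add: factor[OF that])
    qed simp
    finally show ?thesis
      by (simp add: mult.assoc)
  qed
  ultimately show ?thesis
    unfolding op_spectrum_def by blast
qed

lemma op_spectrum_map_prod_add_skew_pair_real:
  fixes A B :: "'h::chilbert \<Rightarrow> 'h"
  assumes "csubspace D" and "closure D = UNIV"
    and "clinear_on D A" and "clinear_on D B"
    and "self_adjoint_on D A" and "self_adjoint_on D B"
    and "Re \<beta> = 0"
  shows "op_spectrum (D \<times> D) (\<lambda>u. map_prod A B u + skew_pair \<beta> u) \<subseteq> {\<kappa>. Im \<kappa> = 0}"
proof (rule self_adjoint_on_spectrum_real)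
  show "csubspace (D \<times> D)"
    by (intro csubspace_Times assms)
  show "closure (D \<times> D) = UNIV"
    by (simp add: closure_Times assms)
  show "clinear_on (D \<times> D) (\<lambda>u. map_prod A B u + skew_pair \<beta> u)"
    by (intro clinear_on_add clinear_on_map_prod clinear_on_skew_pair assms)
  show "self_adjoint_on (D \<times> D) (\<lambda>u. map_prod A B u + skew_pair \<beta> u)"
    by (intro self_adjoint_on_add_symmetric self_adjoint_on_map_prod cinner_skew_pair assms)
qed

lemma one_add_square_of_real_neq_0: "1 + complex_of_real \<alpha> * complex_of_real \<alpha> \<noteq> 0"
proof
  assume "1 + complex_of_real \<alpha> * complex_of_real \<alpha> = 0"
  then have "1 + \<alpha> * \<alpha> = 0"
    by (metis of_real_1 of_real_add of_real_eq_0_iff of_real_mult)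
  then show False
    by (metis add_pos_nonneg zero_le_square zero_less_one less_irrefl)
qed

lemma op_spectrum_block_operator:
  fixes A B :: "'a::complex_inner \<Rightarrow> 'a" and \<alpha> :: real
  defines "a \<equiv> complex_of_real \<alpha>"
  assumes "\<kappa> \<notin> op_spectrum D (\<lambda>u. map_prod A B u + skew_pair (a * \<kappa>) u)"
  shows "(1 + a * a) * \<kappa> \<notin> op_spectrum D (\<lambda>(x, y). (A x + a *\<^sub>C B y, - (a *\<^sub>C A x) + B y))"
  using assms(2)
proof (rule op_spectrum_factor)
  show "bij (\<lambda>v :: 'a \<times> 'a. v + skew_pair a v)"
    unfolding a_def by (intro bij_add_skew_pair one_add_square_of_real_neq_0)
  show "norm v \<le> 1 * norm (v + skew_pair a v)" for v :: "'a \<times> 'a"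
    using norm_le_norm_add_skew_pair[of v \<alpha>] by (simp add: a_def)
  show "(\<lambda>(x, y). (A x + a *\<^sub>C B y, - (a *\<^sub>C A x) + B y)) u - ((1 + a * a) * \<kappa>) *\<^sub>C u
      = (\<lambda>v. v + skew_pair a v) (map_prod A B u + skew_pair (a * \<kappa>) u - \<kappa> *\<^sub>C u)" for u
    by (cases u) (simp only: prod.case block_operator_factorization[OF refl])
qed

theorem lemma15:
  fixes D :: "'h::chilbert set" and A B :: "'h \<Rightarrow> 'h" and \<alpha> :: real
  assumes "csubspace D" and "closure D = UNIV"
    and "clinear_on D A" and "clinear_on D B"
    and "self_adjoint_on D A" and "self_adjoint_on D B"
  shows "op_spectrum (D \<times> D)
           (\<lambda>(x, y). (A x + complex_of_real \<alpha> *\<^sub>C B y,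
                      - (complex_of_real \<alpha> *\<^sub>C A x) + B y))
         \<inter> {l. Re l = 0} \<subseteq> {0}"
proof (intro subsetI, elim IntE, rule ccontr)
  fix l assume spec: "l \<in> op_spectrum (D \<times> D) (\<lambda>(x, y). (A x + complex_of_real \<alpha> *\<^sub>C B y,
      - (complex_of_real \<alpha> *\<^sub>C A x) + B y))" and "l \<in> {l. Re l = 0}" and "l \<notin> {0}"
  then have "Re l = 0" and "Im l \<noteq> 0"
    by (auto simp: complex_eq_iff)
  define a where "a = complex_of_real \<alpha>"
  define \<kappa> where "\<kappa> = l / (1 + a * a)"
  have l: "l = (1 + a * a) * \<kappa>"
    using one_add_square_of_real_neq_0[of \<alpha>] by (simp add: \<kappa>_def a_def)
  have k: "1 + a * a = complex_of_real (1 + \<alpha> * \<alpha>)" and "1 + \<alpha> * \<alpha> > 0"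
    by (simp_all add: a_def add_pos_nonneg)
  have "Re (a * \<kappa>) = 0" and "Im \<kappa> \<noteq> 0"
    using \<open>Re l = 0\<close> \<open>Im l \<noteq> 0\<close> \<open>1 + \<alpha> * \<alpha> > 0\<close> by (simp_all add: \<kappa>_def k a_def)
  then have "\<kappa> \<notin> op_spectrum (D \<times> D) (\<lambda>u. map_prod A B u + skew_pair (a * \<kappa>) u)"
    using op_spectrum_map_prod_add_skew_pair_real[OF assms] by blast
  then have "l \<notin> op_spectrum (D \<times> D) (\<lambda>(x, y). (A x + a *\<^sub>C B y, - (a *\<^sub>C A x) + B y))"
    unfolding l a_def by (rule op_spectrum_block_operator)
  with spec show False
    by (simp add: a_def)
qed

end
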